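(* Let $f(\mathbf{x})=\mathbf{x}^{T}A\mathbf{x}+b^{T}\mathbf{x}+1$ be a polynomial of degree $2$ ($A\in\mathbb{R}^{n\times n}$ symmetric, $A\neq0$, $b\in\mathbb{R}^n$) which admits a monic determinantal representation $f(\mathbf{x})=\det(I_k+L(\mathbf{x}))$, $L(\mathbf{x})=x_1A_1+\dots+x_nA_n$, with Hermitian (or real symmetric) $k\times k$ matrices $A_j$. Then the spectrahedron $S=\{\mathbf{x}\in\mathbb{R}^n: I_k+L(\mathbf{x})\succeq 0\}$ does not contain a full dimensional cone if and only if $A$ is negative semidefinite.
   Context: For $f(\mathbf{x})=\det(I+L(\mathbf{x}))$ of degree $d$, the spectrahedron $S=\{\mathbf{x}: I+L(\mathbf{x})\succeq 0\}$ is said to contain a full dimensional cone if there exists $\mathbf{x}\in\mathbb{R}^n$ such that $L(\mathbf{x})\succeq 0$ and $\operatorname{rank}L(\mathbf{x})=d$. *)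

theory Defs
  imports "HOL-Analysis.Analysis"
begin

text \<open>Hermitian complex k x k matrix (real symmetric matrices are the special case
  with real entries).\<close>
definition hermitian_mat :: "complex^'k^'k \<Rightarrow> bool" where
  "hermitian_mat M \<longleftrightarrow> (\<forall>i j. M $ i $ j = cnj (M $ j $ i))"

definition psd_herm :: "complex^'k^'k \<Rightarrow> bool" where
  "psd_herm M \<longleftrightarrow> hermitian_mat M \<and>
     (\<forall>v::complex^'k. 0 \<le> Re (\<Sum>i\<in>UNIV. cnj (v $ i) * (M *v v) $ i))"

definition neg_semidef :: "real^'n^'n \<Rightarrow> bool" where
  "neg_semidef A \<longleftrightarrow> (\<forall>v::real^'n. v \<bullet> (A *v v) \<le> 0)"

definition pencil :: "('n::finite \<Rightarrow> complex^'k::finite^'k) \<Rightarrow> real^'n \<Rightarrow> complex^'k^'k" where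
  "pencil As x = (\<chi> i j. \<Sum>l\<in>UNIV. complex_of_real (x $ l) * (As l $ i $ j))"

definition spectrahedron :: "('n::finite \<Rightarrow> complex^'k::finite^'k) \<Rightarrow> (real^'n) set" where
  "spectrahedron As = {x. psd_herm (mat 1 + pencil As x)}"

text \<open>S contains a full dimensional cone (w.r.t. degree d of f = det(I + L(x))):
  there is x with L(x) \<succeq> 0 and rank L(x) = d.\<close>
definition contains_full_dim_cone :: "('n::finite \<Rightarrow> complex^'k::finite^'k) \<Rightarrow> nat \<Rightarrow> bool" where
  "contains_full_dim_cone As d \<longleftrightarrow>
     (\<exists>x. psd_herm (pencil As x) \<and> rank (pencil As x) = d)"

end

theory Submission
  imports Defs "HOL-Computational_Algebra.Polynomial"
begin

text \<open>Restrict the representation to a line: if \<open>L(x)\<close> has an orthonormal eigenbasis with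
  eigenvalues \<open>d\<^sub>j\<close>, then \<open>\<Prod>\<^sub>j (1 + t d\<^sub>j) = det (I + L(t x)) = f(t x) = (x\<^sup>T A x) t\<^sup>2 + (b\<^sup>T x) t + 1\<close>.
  Comparing coefficients, \<open>L(x)\<close> has at most two nonzero eigenvalues, and \<open>x\<^sup>T A x\<close> is their product
  when there are two of them and \<open>0\<close> otherwise. Hence a point of the cone (\<open>L(x) \<succeq> 0\<close> of rank 2)
  has \<open>x\<^sup>T A x > 0\<close>; conversely, if \<open>x\<^sup>T A x > 0\<close> the two nonzero eigenvalues of \<open>L(x)\<close> have the
  same sign, so \<open>L(x)\<close> or \<open>L(-x) = -L(x)\<close> is positive semidefinite of rank 2.\<close>

section \<open>The complex inner product on \<open>complex^'k\<close>\<close>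

definition cinner :: "complex^'k \<Rightarrow> complex^'k \<Rightarrow> complex" where
  "cinner u v = (\<Sum>i\<in>UNIV. cnj (u $ i) * v $ i)"

definition quad_form :: "complex^'k^'k \<Rightarrow> complex^'k \<Rightarrow> real" where
  "quad_form M u = Re (cinner u (M *v u))"

lemma psd_herm_iff_quad_form: "psd_herm M \<longleftrightarrow> hermitian_mat M \<and> (\<forall>v. 0 \<le> quad_form M v)"
  by (simp add: psd_herm_def quad_form_def cinner_def)

lemma cnj_cinner: "cnj (cinner u v) = cinner v u"
  by (simp add: cinner_def mult.commute)

lemma cinner_add_right: "cinner u (v + w) = cinner u v + cinner u w"
  by (simp add: cinner_def distrib_left sum.distrib)

lemma cinner_add_left: "cinner (v + w) u = cinner v u + cinner w u"
  by (simp add: cinner_def distrib_right sum.distrib)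

lemma cinner_diff_right: "cinner u (v - w) = cinner u v - cinner u w"
  by (simp add: cinner_def right_diff_distrib sum_subtractf)

lemma vector_scaleR_component_complex: "(r *\<^sub>R v) $ i = complex_of_real r * v $ i"
  by (metis vector_scaleR_component scaleR_conv_of_real)

lemma cinner_scaleR_right: "cinner u (r *\<^sub>R v) = of_real r * cinner u v"
  unfolding cinner_def vector_scaleR_component_complex by (simp add: sum_distrib_left algebra_simps)

lemma cinner_scaleR_left: "cinner (r *\<^sub>R v) u = of_real r * cinner v u"
  unfolding cinner_def vector_scaleR_component_complex by (simp add: sum_distrib_left algebra_simps)

lemma cinner_self: "cinner u u = of_real ((norm u)\<^sup>2)"
proof -
  have "(norm u)\<^sup>2 = (\<Sum>i\<in>UNIV. (norm (u $ i))\<^sup>2)"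
    unfolding norm_vec_def L2_set_def by (simp add: sum_nonneg)
  then have "of_real ((norm u)\<^sup>2) = (\<Sum>i\<in>UNIV. complex_of_real ((norm (u $ i))\<^sup>2))"
    by simp
  also have "\<dots> = (\<Sum>i\<in>UNIV. cnj (u $ i) * u $ i)"
    by (simp only: complex_norm_square mult.commute)
  finally show ?thesis unfolding cinner_def by simp
qed

lemma matrix_vector_mult_scaleR_complex: "M *v (r *\<^sub>R v) = r *\<^sub>R (M *v (v::complex^'k))"
  by (simp add: vec_eq_iff matrix_vector_mult_def vector_scaleR_component_complex
      scaleR_sum_right algebra_simps)

lemma hermitian_mat_cinner_adjoint:
  assumes "hermitian_mat M"
  shows "cinner u (M *v v) = cinner (M *v u) v"
proof -
  have cnj_entry: "cnj (M $ j $ i) = M $ i $ j" for i j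
    using assms unfolding hermitian_mat_def by (metis complex_cnj_cnj)
  have "cinner u (M *v v) = (\<Sum>i\<in>UNIV. \<Sum>j\<in>UNIV. cnj (u $ i) * M $ i $ j * v $ j)"
    by (simp add: cinner_def matrix_vector_mult_def sum_distrib_left mult.assoc)
  also have "\<dots> = (\<Sum>j\<in>UNIV. \<Sum>i\<in>UNIV. cnj (u $ i) * M $ i $ j * v $ j)"
    by (rule sum.swap)
  also have "\<dots> = cinner (M *v u) v"
    unfolding cinner_def matrix_vector_mult_def
    by (simp add: cnj_sum sum_distrib_right sum_distrib_left cnj_entry mult.commute mult.left_commute)
  finally show ?thesis .
qed

lemma quad_form_scaleR: "quad_form M (r *\<^sub>R v) = r\<^sup>2 * quad_form M v"
  by (simp add: quad_form_def matrix_vector_mult_scaleR_complex cinner_scaleR_left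
      cinner_scaleR_right power2_eq_square)

lemma quad_form_add_scaleR:
  assumes "hermitian_mat M"
  shows "quad_form M (u + e *\<^sub>R w) = quad_form M u + 2 * e * Re (cinner w (M *v u)) + e\<^sup>2 * quad_form M w"
proof -
  have "Re (cinner u (M *v w)) = Re (cinner w (M *v u))"
    by (metis hermitian_mat_cinner_adjoint[OF assms] cnj_cinner cnj.sel(1))
  then show ?thesis
    unfolding quad_form_def
    by (simp add: matrix_vector_mult_scaleR_complex cinner_add_left
        cinner_add_right cinner_scaleR_left cinner_scaleR_right algebra_simps power2_eq_square)
qed

lemma norm_add_scaleR_power2:
  "(norm (u + e *\<^sub>R w))\<^sup>2 = (norm u)\<^sup>2 + 2 * e * Re (cinner w u) + e\<^sup>2 * (norm (w::complex^'k))\<^sup>2"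
proof -
  have "Re (cinner u w) = Re (cinner w u)" by (metis cnj_cinner cnj.sel(1))
  then have "Re (cinner (u + e *\<^sub>R w) (u + e *\<^sub>R w))
      = Re (cinner u u) + 2 * e * Re (cinner w u) + e\<^sup>2 * Re (cinner w w)"
    by (simp add: cinner_add_left cinner_add_right cinner_scaleR_left cinner_scaleR_right
        algebra_simps power2_eq_square)
  then show ?thesis by (simp add: cinner_self)
qed

section \<open>Spectral theorem for Hermitian matrices\<close>

lemma linear_coeff_zero_if_quadratic_nonpos:
  fixes a b :: real
  assumes "\<And>e. 2 * e * a + e\<^sup>2 * b \<le> 0"
  shows "a = 0"
proof (rule ccontr)
  assume "a \<noteq> 0"
  define e where "e = a / (\<bar>b\<bar> + 1)"
  have e_scaled: "e * (\<bar>b\<bar> + 1) = a" unfolding e_def by simp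
  have "(2 * e * a + e\<^sup>2 * b) * (\<bar>b\<bar> + 1)\<^sup>2 = a\<^sup>2 * (2 * \<bar>b\<bar> + 2 + b)"
  proof -
    have "(2 * e * a + e\<^sup>2 * b) * (\<bar>b\<bar> + 1)\<^sup>2
        = 2 * a * (e * (\<bar>b\<bar> + 1)) * (\<bar>b\<bar> + 1) + (e * (\<bar>b\<bar> + 1))\<^sup>2 * b"
      by (simp add: algebra_simps power2_eq_square)
    then show ?thesis unfolding e_scaled by (simp add: algebra_simps power2_eq_square)
  qed
  moreover have "(2 * e * a + e\<^sup>2 * b) * (\<bar>b\<bar> + 1)\<^sup>2 \<le> 0"
    using assms[of e] by (simp add: mult_nonpos_nonneg)
  moreover have "a\<^sup>2 * (2 * \<bar>b\<bar> + 2 + b) > 0"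
    using \<open>a \<noteq> 0\<close> by (intro mult_pos_pos) auto
  ultimately show False by linarith
qed

text \<open>Rayleigh's variational argument: perturbing \<open>u\<close> along \<open>v = M u - \<lambda> u\<close> inside \<open>W\<close>, the first
  order term of \<open>quad_form M - \<lambda> \<parallel>_\<parallel>\<^sup>2\<close> must vanish, and its coefficient is \<open>2 \<parallel>v\<parallel>\<^sup>2\<close>.\<close>

lemma hermitian_quad_form_maximizer_eigenvector:
  fixes M :: "complex^'k^'k"
  assumes H: "hermitian_mat M" and W: "subspace W" and invariant: "\<forall>v\<in>W. M *v v \<in> W"
    and u: "u \<in> W" "norm u = 1"
    and max: "\<forall>v\<in>W. quad_form M v \<le> quad_form M u * (norm v)\<^sup>2"
  shows "M *v u = quad_form M u *\<^sub>R u"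
proof -
  define l where "l = quad_form M u"
  define v where "v = M *v u - l *\<^sub>R u"
  have "v \<in> W"
    unfolding v_def using u invariant W by (simp add: subspace_diff subspace_scale)
  have "2 * e * (Re (cinner v (M *v u)) - l * Re (cinner v u)) + e\<^sup>2 * (quad_form M v - l * (norm v)\<^sup>2) \<le> 0"
    for e
  proof -
    have "u + e *\<^sub>R v \<in> W" using u \<open>v \<in> W\<close> W by (simp add: subspace_add subspace_scale)
    then have "quad_form M (u + e *\<^sub>R v) \<le> l * (norm (u + e *\<^sub>R v))\<^sup>2"
      using max l_def by blast
    then show ?thesis
      unfolding quad_form_add_scaleR[OF H] norm_add_scaleR_power2 l_def u(2)
      by (simp add: algebra_simps)
  qed
  then have "Re (cinner v (M *v u)) - l * Re (cinner v u) = 0"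
    by (intro linear_coeff_zero_if_quadratic_nonpos[where b = "quad_form M v - l * (norm v)\<^sup>2"])
      (simp add: mult.assoc)
  moreover have "cinner v v = cinner v (M *v u) - of_real l * cinner v u"
    by (simp add: v_def cinner_diff_right cinner_scaleR_right)
  ultimately have "Re (cinner v v) = 0" by simp
  then have "v = 0" by (simp add: cinner_self)
  then show ?thesis by (simp add: v_def l_def)
qed

lemma quad_form_attains_max_on_subspace:
  fixes M :: "complex^'k^'k"
  assumes W: "subspace W" and nontrivial: "W \<noteq> {0}"
  shows "\<exists>u\<in>W. norm u = 1 \<and> (\<forall>v\<in>W. quad_form M v \<le> quad_form M u * (norm v)\<^sup>2)"
proof -
  define K where "K = W \<inter> sphere 0 1"
  have "compact K" unfolding K_def by (simp add: closed_subspace[OF W] closed_Int_compact)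
  obtain u0 where "u0 \<in> W" "u0 \<noteq> 0" using nontrivial subspace_0[OF W] by blast
  then have "(1 / norm u0) *\<^sub>R u0 \<in> K" by (simp add: K_def subspace_scale[OF W])
  then have "K \<noteq> {}" by blast
  moreover have "continuous_on K (quad_form M)"
    unfolding quad_form_def cinner_def matrix_vector_mult_def by (intro continuous_intros)
  ultimately obtain u where "u \<in> K" and u_max: "\<forall>y\<in>K. quad_form M y \<le> quad_form M u"
    using continuous_attains_sup[OF \<open>compact K\<close>] by blast
  have "quad_form M v \<le> quad_form M u * (norm v)\<^sup>2" if "v \<in> W" for v
  proof (cases "v = 0")
    case True then show ?thesis by (simp add: quad_form_def cinner_def)
  next
    case False
    then have "(1 / norm v) *\<^sub>R v \<in> K" using that by (simp add: K_def subspace_scale[OF W])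
    then have "quad_form M ((1 / norm v) *\<^sub>R v) \<le> quad_form M u" using u_max by blast
    then have "(1 / norm v)\<^sup>2 * quad_form M v \<le> quad_form M u" by (simp add: quad_form_scaleR)
    then show ?thesis using False by (simp add: field_simps power2_eq_square)
  qed
  then show ?thesis using \<open>u \<in> K\<close> by (auto simp: K_def)
qed

lemma hermitian_invariant_subspace_has_eigenvector:
  fixes M :: "complex^'k^'k"
  assumes "hermitian_mat M" "subspace W" "\<forall>v\<in>W. M *v v \<in> W" "W \<noteq> {0}"
  shows "\<exists>u\<in>W. norm u = 1 \<and> (\<exists>l. M *v u = l *\<^sub>R u)"
  using quad_form_attains_max_on_subspace[OF assms(2,4)]
    hermitian_quad_form_maximizer_eigenvector[OF assms(1-3)] by blast

lemma orthogonal_complement_subspace: "subspace {u. \<forall>i\<in>S. cinner (g i) u = 0}"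
proof -
  have cinner_zero: "cinner w 0 = 0" for w :: "complex^'k" by (simp add: cinner_def)
  show ?thesis by (simp add: subspace_def cinner_zero cinner_add_right cinner_scaleR_right)
qed

lemma orthogonal_complement_nontrivial:
  fixes g :: "'k \<Rightarrow> complex^'k"
  assumes "a \<notin> S"
  shows "\<exists>u. u \<noteq> 0 \<and> (\<forall>i\<in>S. cinner (g i) u = 0)"
proof -
  define G :: "complex^'k^'k" where "G = (\<chi> i. if i \<in> S then (\<chi> l. cnj (g i $ l)) else 0)"
  have "row a G = 0" using assms by (simp add: G_def row_def vec_eq_iff)
  then have "\<not> inj ((*v) G)"
    using det_zero_row(2) det_nz_iff_inj_gen[of "(*v) G"] by auto
  then obtain x y where "x \<noteq> y" "G *v x = G *v y" by (auto simp: inj_def)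
  then have "x - y \<noteq> 0" "G *v (x - y) = 0" by (simp_all add: matrix_vector_mult_diff_distrib)
  moreover have "(G *v (x - y)) $ i = cinner (g i) (x - y)" if "i \<in> S" for i
    using that by (simp add: G_def matrix_vector_mult_def cinner_def)
  ultimately show ?thesis by (metis zero_index)
qed

definition orthonormal_eigenbasis :: "complex^'k^'k \<Rightarrow> ('k \<Rightarrow> complex^'k) \<Rightarrow> ('k \<Rightarrow> real) \<Rightarrow> bool" where
  "orthonormal_eigenbasis M f d \<longleftrightarrow>
     (\<forall>i j. cinner (f i) (f j) = (if i = j then 1 else 0)) \<and> (\<forall>j. M *v f j = d j *\<^sub>R f j)"

lemma hermitian_mat_has_orthonormal_eigenbasis:
  fixes M :: "complex^'k^'k"
  assumes H: "hermitian_mat M"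
  shows "\<exists>f d. orthonormal_eigenbasis M f d"
proof -
  have "\<exists>g d. (\<forall>i\<in>S. \<forall>j\<in>S. cinner (g i) (g j) = (if i = j then 1 else 0))
            \<and> (\<forall>i\<in>S. M *v g i = d i *\<^sub>R g i)"
    if "finite S" for S :: "'k set"
    using that
  proof (induction S rule: finite_induct)
    case empty then show ?case by auto
  next
    case (insert a S)
    then obtain g d where ON: "\<forall>i\<in>S. \<forall>j\<in>S. cinner (g i) (g j) = (if i = j then 1 else 0)"
      and EG: "\<forall>i\<in>S. M *v g i = d i *\<^sub>R g i" by blast
    define W where "W = {u. \<forall>i\<in>S. cinner (g i) u = 0}"
    have invariant: "\<forall>u\<in>W. M *v u \<in> W"
    proof (intro ballI, unfold W_def mem_Collect_eq, intro ballI)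
      fix u i assume "\<forall>i\<in>S. cinner (g i) u = 0" "i \<in> S"
      then show "cinner (g i) (M *v u) = 0"
        using EG by (simp add: hermitian_mat_cinner_adjoint[OF H, of "g i"] cinner_scaleR_left)
    qed
    have "W \<noteq> {0}"
      using orthogonal_complement_nontrivial[OF insert.hyps(2), of g] by (auto simp: W_def)
    then obtain v l where v: "v \<in> W" "norm v = 1" "M *v v = l *\<^sub>R v"
      using hermitian_invariant_subspace_has_eigenvector[OF H _ invariant]
        orthogonal_complement_subspace W_def by blast
    have v_orth: "cinner (g i) v = 0" "cinner v (g i) = 0" if "i \<in> S" for i
      using v(1) that cnj_cinner[of v "g i"] by (auto simp: W_def)
    have v_unit: "cinner v v = 1" by (simp add: cinner_self v(2))
    show ?case
    proof (intro exI[of _ "g(a := v)"] exI[of _ "d(a := l)"] conjI ballI)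
      fix i j assume "i \<in> insert a S" "j \<in> insert a S"
      then show "cinner ((g(a := v)) i) ((g(a := v)) j) = (if i = j then 1 else 0)"
        using ON v_orth v_unit insert.hyps(2) by (cases "i = a"; cases "j = a") auto
    next
      fix i assume "i \<in> insert a S"
      then show "M *v (g(a := v)) i = (d(a := l)) i *\<^sub>R (g(a := v)) i"
        using EG v(3) by (cases "i = a") auto
    qed
  qed
  from this[of UNIV] show ?thesis by (simp add: orthonormal_eigenbasis_def)
qed

section \<open>Consequences of an orthonormal eigenbasis\<close>

lemma orthonormal_eigenbasis_uminus:
  "orthonormal_eigenbasis M f d \<Longrightarrow> orthonormal_eigenbasis (- M) f (\<lambda>j. - d j)"
  by (simp add: orthonormal_eigenbasis_def matrix_vector_mult_def vec_eq_iff sum_negf)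

lemma orthonormal_eigenbasis_unitary:
  fixes M :: "complex^'k^'k"
  assumes "orthonormal_eigenbasis M f d"
  shows "(\<chi> i j. cnj (f i $ j)) ** (\<chi> i j. f j $ i) = (mat 1 :: complex^'k^'k)"
  using assms
  by (simp add: orthonormal_eigenbasis_def vec_eq_iff matrix_matrix_mult_def mat_def cinner_def)

lemma orthonormal_eigenbasis_completeness:
  fixes M :: "complex^'k^'k"
  assumes "orthonormal_eigenbasis M f d"
  shows "(\<Sum>j\<in>UNIV. f j $ p * cnj (f j $ l)) = (if p = l then 1 else 0)"
proof -
  have "(\<chi> i j. f j $ i) ** (\<chi> i j. cnj (f i $ j)) = (mat 1 :: complex^'k^'k)"
    using matrix_left_right_inverse orthonormal_eigenbasis_unitary[OF assms] by blast
  then have "((\<chi> i j. f j $ i) ** (\<chi> i j. cnj (f i $ j))) $ p $ l = (mat 1 :: complex^'k^'k) $ p $ l"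
    by simp
  then show ?thesis by (simp add: matrix_matrix_mult_def mat_def)
qed

lemma orthonormal_eigenbasis_entry:
  fixes M :: "complex^'k^'k"
  assumes B: "orthonormal_eigenbasis M f d"
  shows "M $ i $ l = (\<Sum>j\<in>UNIV. of_real (d j) * f j $ i * cnj (f j $ l))"
proof -
  have "M $ i $ l = (\<Sum>p\<in>UNIV. M $ i $ p * (if p = l then 1 else 0))"
    by (simp add: if_distrib cong: if_cong)
  also have "\<dots> = (\<Sum>p\<in>UNIV. \<Sum>j\<in>UNIV. M $ i $ p * f j $ p * cnj (f j $ l))"
    by (simp add: orthonormal_eigenbasis_completeness[OF B, symmetric] sum_distrib_left mult.assoc)
  also have "\<dots> = (\<Sum>j\<in>UNIV. (M *v f j) $ i * cnj (f j $ l))"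
    by (subst sum.swap) (simp add: matrix_vector_mult_def sum_distrib_right)
  also have "\<dots> = (\<Sum>j\<in>UNIV. of_real (d j) * f j $ i * cnj (f j $ l))"
    using B
    by (simp add: orthonormal_eigenbasis_def vector_scaleR_component_complex
        scaleR_conv_of_real[where 'a=complex] mult.assoc)
  finally show ?thesis .
qed

lemma det_identity_plus_scaleR:
  fixes M :: "complex^'k^'k"
  assumes B: "orthonormal_eigenbasis M f d"
  shows "det (mat 1 + t *\<^sub>R M) = of_real (\<Prod>j\<in>UNIV. 1 + t * d j)"
proof -
  define U :: "complex^'k^'k" where "U = (\<chi> i j. f j $ i)"
  define V :: "complex^'k^'k" where "V = (\<chi> i j. cnj (f i $ j))"
  define D :: "complex^'k^'k" where "D = (\<chi> i j. if i = j then of_real (1 + t * d i) else 0)"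
  have "V ** U = mat 1" unfolding U_def V_def by (rule orthonormal_eigenbasis_unitary[OF B])
  have UD: "(U ** D) $ i $ p = f p $ i * of_real (1 + t * d p)" for i p
    by (simp add: matrix_matrix_mult_def U_def D_def if_distrib cong: if_cong)
  have "((U ** D) ** V) $ i $ l = (mat 1 + t *\<^sub>R M) $ i $ l" for i l
  proof -
    have "((U ** D) ** V) $ i $ l = (\<Sum>p\<in>UNIV. f p $ i * of_real (1 + t * d p) * cnj (f p $ l))"
      by (simp only: matrix_matrix_mult_def[of "U ** D"] UD V_def vec_lambda_beta)
    also have "\<dots> = (\<Sum>p\<in>UNIV. f p $ i * cnj (f p $ l))
        + of_real t * (\<Sum>p\<in>UNIV. of_real (d p) * f p $ i * cnj (f p $ l))"
      by (simp add: algebra_simps sum.distrib sum_distrib_left)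
    also have "\<dots> = (mat 1 + t *\<^sub>R M) $ i $ l"
      by (simp add: orthonormal_eigenbasis_completeness[OF B] orthonormal_eigenbasis_entry[OF B]
          mat_def scaleR_conv_of_real[where 'a=complex])
    finally show ?thesis .
  qed
  then have "mat 1 + t *\<^sub>R M = (U ** D) ** V" by (simp add: vec_eq_iff)
  then have "det (mat 1 + t *\<^sub>R M) = det D * det (V ** U)" by (simp add: det_mul)
  also have "\<dots> = (\<Prod>i\<in>UNIV. D $ i $ i)"
    using \<open>V ** U = mat 1\<close> by (simp add: det_diagonal D_def)
  finally show ?thesis by (simp add: D_def)
qed

lemma orthonormal_eigenbasis_quad_form:
  fixes M :: "complex^'k^'k"
  assumes B: "orthonormal_eigenbasis M f d"
  shows "quad_form M v = (\<Sum>j\<in>UNIV. d j * (norm (cinner (f j) v))\<^sup>2)"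
proof -
  define c where "c j = cinner (f j) v" for j
  have Mv: "(M *v v) $ i = (\<Sum>j\<in>UNIV. of_real (d j) * f j $ i * c j)" for i
  proof -
    have "(M *v v) $ i = (\<Sum>l\<in>UNIV. \<Sum>j\<in>UNIV. of_real (d j) * f j $ i * cnj (f j $ l) * v $ l)"
      by (simp add: matrix_vector_mult_def orthonormal_eigenbasis_entry[OF B] sum_distrib_right)
    also have "\<dots> = (\<Sum>j\<in>UNIV. of_real (d j) * f j $ i * c j)"
      by (subst sum.swap) (simp add: c_def cinner_def sum_distrib_left mult.assoc)
    finally show ?thesis .
  qed
  have "cinner v (M *v v) = (\<Sum>j\<in>UNIV. of_real (d j) * c j * cinner v (f j))"
    by (subst cinner_def, simp add: Mv sum_distrib_left, subst sum.swap)
      (simp add: cinner_def sum_distrib_left algebra_simps)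
  also have "\<dots> = (\<Sum>j\<in>UNIV. of_real (d j * (norm (c j))\<^sup>2))"
  proof (rule sum.cong)
    fix j
    have "cinner v (f j) = cnj (c j)" by (simp add: c_def cnj_cinner)
    then show "of_real (d j) * c j * cinner v (f j) = of_real (d j * (norm (c j))\<^sup>2)"
      by (simp add: mult.assoc complex_norm_square[symmetric])
  qed simp
  finally show ?thesis by (simp add: quad_form_def Re_sum c_def)
qed

lemma psd_herm_iff_eigenvalues_nonneg:
  fixes M :: "complex^'k^'k"
  assumes "hermitian_mat M" and B: "orthonormal_eigenbasis M f d"
  shows "psd_herm M \<longleftrightarrow> (\<forall>j. 0 \<le> d j)"
proof
  assume "psd_herm M"
  then have "0 \<le> quad_form M (f j)" for j by (simp add: psd_herm_iff_quad_form)
  moreover have "quad_form M (f j) = d j" for j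
    using B by (simp add: orthonormal_eigenbasis_def quad_form_def cinner_scaleR_right)
  ultimately show "\<forall>j. 0 \<le> d j" by simp
next
  assume "\<forall>j. 0 \<le> d j"
  then show "psd_herm M"
    using assms by (simp add: psd_herm_iff_quad_form orthonormal_eigenbasis_quad_form sum_nonneg)
qed

definition vec_cnj :: "complex^'k \<Rightarrow> complex^'k" where
  "vec_cnj v = (\<chi> l. cnj (v $ l))"

lemma orthonormal_eigenbasis_vec_cnj_inj:
  fixes M :: "complex^'k^'k"
  assumes "orthonormal_eigenbasis M f d"
  shows "inj (\<lambda>j. vec_cnj (f j))"
proof (rule injI)
  fix i j assume "vec_cnj (f i) = vec_cnj (f j)"
  then have "f i = f j" by (simp add: vec_cnj_def vec_eq_iff)
  moreover have "cinner (f j) (f j) = 1" "i \<noteq> j \<Longrightarrow> cinner (f i) (f j) = 0"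
    using assms by (simp_all add: orthonormal_eigenbasis_def)
  ultimately show "i = j" by force
qed

lemma orthonormal_eigenbasis_vec_cnj_independent:
  fixes M :: "complex^'k^'k"
  assumes B: "orthonormal_eigenbasis M f d"
  shows "vec.independent ((\<lambda>j. vec_cnj (f j)) ` N)"
  unfolding vec.independent_explicit
proof (intro conjI allI impI ballI)
  show "finite ((\<lambda>j. vec_cnj (f j)) ` N)" by simp
  fix c v assume S: "(\<Sum>v\<in>(\<lambda>j. vec_cnj (f j)) ` N. c v *s v) = 0"
    and "v \<in> (\<lambda>j. vec_cnj (f j)) ` N"
  then obtain l where "l \<in> N" and v: "v = vec_cnj (f l)" by blast
  have ON: "cinner (f i) (f j) = (if i = j then 1 else 0)" for i j
    using B by (simp add: orthonormal_eigenbasis_def)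
  have "(\<Sum>j\<in>N. c (vec_cnj (f j)) *s vec_cnj (f j)) = 0"
    using S by (simp add: sum.reindex[OF inj_on_subset[OF orthonormal_eigenbasis_vec_cnj_inj[OF B]]])
  then have "0 = (\<Sum>p\<in>UNIV. f l $ p * (\<Sum>j\<in>N. c (vec_cnj (f j)) *s vec_cnj (f j)) $ p)"
    by simp
  also have "\<dots> = (\<Sum>j\<in>N. c (vec_cnj (f j)) * cinner (f j) (f l))"
    by (subst sum_component, simp add: sum_distrib_left, subst sum.swap)
      (simp add: cinner_def vec_cnj_def sum_distrib_left algebra_simps)
  also have "\<dots> = c v"
    using \<open>l \<in> N\<close> by (simp add: ON v if_distrib cong: if_cong)
  finally show "c v = 0" by simp
qed

lemma orthonormal_eigenbasis_rows_in_span: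
  fixes M :: "complex^'k^'k"
  assumes B: "orthonormal_eigenbasis M f d"
  shows "rows M \<subseteq> vec.span ((\<lambda>j. vec_cnj (f j)) ` {j. d j \<noteq> 0})"
proof
  fix r assume "r \<in> rows M"
  then obtain i where r: "r = row i M" by (auto simp: rows_def)
  have "r $ l = (\<Sum>j\<in>{j. d j \<noteq> 0}. (of_real (d j) * f j $ i) * vec_cnj (f j) $ l)" for l
  proof -
    have "r $ l = (\<Sum>j\<in>UNIV. of_real (d j) * f j $ i * cnj (f j $ l))"
      by (simp add: r row_def orthonormal_eigenbasis_entry[OF B])
    also have "\<dots> = (\<Sum>j\<in>{j. d j \<noteq> 0}. of_real (d j) * f j $ i * cnj (f j $ l))"
      by (rule sum.mono_neutral_right) auto
    finally show ?thesis by (simp add: vec_cnj_def)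
  qed
  then have "r = (\<Sum>j\<in>{j. d j \<noteq> 0}. (of_real (d j) * f j $ i) *s vec_cnj (f j))"
    by (simp add: vec_eq_iff sum_component)
  also have "\<dots> \<in> vec.span ((\<lambda>j. vec_cnj (f j)) ` {j. d j \<noteq> 0})"
    by (intro vec.span_sum vec.span_scale vec.span_base) auto
  finally show "r \<in> vec.span ((\<lambda>j. vec_cnj (f j)) ` {j. d j \<noteq> 0})" .
qed

text \<open>Conversely, \<open>conj (f j) = d\<^sub>j\<^sup>-\<^sup>1 \<Sum>\<^sub>i conj (f j)\<^sub>i \<cdot> row i M\<close> whenever \<open>d\<^sub>j \<noteq> 0\<close>.\<close>

lemma orthonormal_eigenbasis_vec_cnj_in_row_span:
  fixes M :: "complex^'k^'k"
  assumes B: "orthonormal_eigenbasis M f d" and "d j \<noteq> 0"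
  shows "vec_cnj (f j) \<in> vec.span (rows M)"
proof -
  have ON: "cinner (f i) (f p) = (if i = p then 1 else 0)" for i p
    using B by (simp add: orthonormal_eigenbasis_def)
  have "(\<Sum>i\<in>UNIV. (cnj (f j $ i) / of_real (d j)) * M $ i $ l) = cnj (f j $ l)" for l
  proof -
    have "(\<Sum>i\<in>UNIV. (cnj (f j $ i) / of_real (d j)) * M $ i $ l)
        = (\<Sum>p\<in>UNIV. (of_real (d p) / of_real (d j) * cnj (f p $ l)) * cinner (f j) (f p))"
      by (simp add: orthonormal_eigenbasis_entry[OF B] sum_distrib_left, subst sum.swap)
        (simp add: cinner_def sum_distrib_left sum_distrib_right sum_divide_distrib algebra_simps)
    also have "\<dots> = cnj (f j $ l)"
      using \<open>d j \<noteq> 0\<close> by (simp add: ON if_distrib cong: if_cong)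
    finally show ?thesis .
  qed
  then have "vec_cnj (f j) = (\<Sum>i\<in>UNIV. (cnj (f j $ i) / of_real (d j)) *s row i M)"
    by (simp add: vec_eq_iff vec_cnj_def row_def sum_component)
  also have "\<dots> \<in> vec.span (rows M)"
    by (intro vec.span_sum vec.span_scale vec.span_base) (auto simp: rows_def)
  finally show ?thesis .
qed

lemma rank_eq_card_nonzero_eigenvalues:
  fixes M :: "complex^'k^'k"
  assumes B: "orthonormal_eigenbasis M f d"
  shows "rank M = card {j. d j \<noteq> 0}"
proof -
  let ?B = "(\<lambda>j. vec_cnj (f j)) ` {j. d j \<noteq> 0}"
  have "rank M = vec.dim (vec.span (rows M))" by (simp add: row_rank_def_gen)
  also have "vec.span (rows M) = vec.span ?B"
    using orthonormal_eigenbasis_rows_in_span[OF B] orthonormal_eigenbasis_vec_cnj_in_row_span[OF B]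
    by (simp add: vec.span_eq image_subset_iff)
  also have "vec.dim (vec.span ?B) = card ?B"
    by (simp add: vec.dim_eq_card_independent[OF orthonormal_eigenbasis_vec_cnj_independent[OF B]])
  also have "\<dots> = card {j. d j \<noteq> 0}"
    by (rule card_image[OF inj_on_subset[OF orthonormal_eigenbasis_vec_cnj_inj[OF B]]]) simp
  finally show ?thesis .
qed

section \<open>The determinantal representation along a line\<close>

lemma hermitian_mat_pencil:
  assumes "\<forall>j. hermitian_mat (As j)"
  shows "hermitian_mat (pencil As x)"
proof -
  have "cnj (As l $ j $ i) = As l $ i $ j" for l i j
    using assms unfolding hermitian_mat_def by (metis complex_cnj_cnj)
  then show ?thesis by (simp add: hermitian_mat_def pencil_def cnj_sum)
qed

lemma pencil_scaleR: "pencil As (t *\<^sub>R x) = t *\<^sub>R pencil As x"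
  by (simp add: vec_eq_iff pencil_def scaleR_sum_right scaleR_conv_of_real[where 'a=complex]
      sum_distrib_left mult.assoc)

lemma pencil_uminus: "pencil As (- x) = - pencil As x"
  by (simp add: vec_eq_iff pencil_def sum_negf)

lemma prod_one_plus_linear_eq_quadratic:
  fixes d :: "'k::finite \<Rightarrow> real"
  assumes "\<And>t. (\<Prod>j\<in>UNIV. 1 + t * d j) = \<alpha> * t\<^sup>2 + \<beta> * t + 1"
  shows "card {j. d j \<noteq> 0} \<le> 2"
    and "card {j. d j \<noteq> 0} = 2 \<Longrightarrow> \<alpha> = (\<Prod>j\<in>{j. d j \<noteq> 0}. d j)"
    and "card {j. d j \<noteq> 0} < 2 \<Longrightarrow> \<alpha> = 0"
proof -
  define P where "P = (\<Prod>j\<in>{j. d j \<noteq> 0}. [:1, d j:])"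
  have "poly P t = \<alpha> * t\<^sup>2 + \<beta> * t + 1" for t
  proof -
    have "poly P t = (\<Prod>j\<in>{j. d j \<noteq> 0}. 1 + t * d j)"
      unfolding P_def by (simp add: poly_prod mult.commute)
    also have "\<dots> = (\<Prod>j\<in>UNIV. 1 + t * d j)"
      by (rule prod.mono_neutral_left) auto
    finally show ?thesis using assms by simp
  qed
  then have "poly P = poly [:1, \<beta>, \<alpha>:]"
    by (auto simp: fun_eq_iff algebra_simps power2_eq_square)
  then have P: "P = [:1, \<beta>, \<alpha>:]" by (simp add: poly_eq_poly_eq_iff)
  have degree_P: "degree P = card {j. d j \<noteq> 0}"
    unfolding P_def by (subst degree_prod_eq_sum_degree) auto
  have "degree P \<le> 2" unfolding P by simp
  then show "card {j. d j \<noteq> 0} \<le> 2" using degree_P by simp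
  have "lead_coeff P = (\<Prod>j\<in>{j. d j \<noteq> 0}. d j)"
    unfolding P_def by (simp add: lead_coeff_prod)
  then show "card {j. d j \<noteq> 0} = 2 \<Longrightarrow> \<alpha> = (\<Prod>j\<in>{j. d j \<noteq> 0}. d j)"
    using degree_P P by (simp add: numeral_2_eq_2)
  assume "card {j. d j \<noteq> 0} < 2"
  then have "coeff P 2 = 0" using degree_P by (intro coeff_eq_0) simp
  then show "\<alpha> = 0" unfolding P by (simp add: numeral_2_eq_2)
qed

lemma eigenvalues_pencil_on_line:
  fixes A :: "real^'n^'n" and As :: "'n \<Rightarrow> complex^'k^'k"
  assumes det_rep: "\<forall>x. complex_of_real (x \<bullet> (A *v x) + b \<bullet> x + 1) = det (mat 1 + pencil As x)"
    and B: "orthonormal_eigenbasis (pencil As x) f d"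
  shows "(\<Prod>j\<in>UNIV. 1 + t * d j) = (x \<bullet> (A *v x)) * t\<^sup>2 + (b \<bullet> x) * t + 1"
proof -
  have "complex_of_real (\<Prod>j\<in>UNIV. 1 + t * d j) = det (mat 1 + pencil As (t *\<^sub>R x))"
    by (simp add: det_identity_plus_scaleR[OF B] pencil_scaleR)
  also have "\<dots> = complex_of_real ((t *\<^sub>R x) \<bullet> (A *v (t *\<^sub>R x)) + b \<bullet> (t *\<^sub>R x) + 1)"
    by (rule det_rep[rule_format, symmetric])
  also have "(t *\<^sub>R x) \<bullet> (A *v (t *\<^sub>R x)) + b \<bullet> (t *\<^sub>R x) + 1 = (x \<bullet> (A *v x)) * t\<^sup>2 + (b \<bullet> x) * t + 1"
    by (simp add: matrix_vector_mult_scaleR power2_eq_square algebra_simps)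
  finally show ?thesis by (simp only: of_real_eq_iff)
qed

lemma quadratic_form_pos_if_psd_rank_two:
  fixes A :: "real^'n^'n" and As :: "'n \<Rightarrow> complex^'k^'k"
  assumes herm: "\<forall>j. hermitian_mat (As j)"
    and det_rep: "\<forall>x. complex_of_real (x \<bullet> (A *v x) + b \<bullet> x + 1) = det (mat 1 + pencil As x)"
    and psd: "psd_herm (pencil As x)" and rank: "rank (pencil As x) = 2"
  shows "x \<bullet> (A *v x) > 0"
proof -
  obtain f d where B: "orthonormal_eigenbasis (pencil As x) f d"
    using hermitian_mat_has_orthonormal_eigenbasis[OF hermitian_mat_pencil[OF herm]] by blast
  have "card {j. d j \<noteq> 0} = 2" using rank rank_eq_card_nonzero_eigenvalues[OF B] by simp
  then have "x \<bullet> (A *v x) = (\<Prod>j\<in>{j. d j \<noteq> 0}. d j)"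
    using prod_one_plus_linear_eq_quadratic(2)[OF eigenvalues_pencil_on_line[OF det_rep B]] by simp
  moreover have "0 < d j" if "d j \<noteq> 0" for j
    using psd psd_herm_iff_eigenvalues_nonneg[OF hermitian_mat_pencil[OF herm] B] that
    by (simp add: order_le_neq_trans)
  ultimately show ?thesis using prod_pos[of "{j. d j \<noteq> 0}" d] by simp
qed

text \<open>The two nonzero eigenvalues of \<open>L(x)\<close> have positive product, hence a common sign; if it
  is negative, pass to \<open>L(-x) = -L(x)\<close>.\<close>

lemma psd_rank_two_if_quadratic_form_pos:
  fixes A :: "real^'n^'n" and As :: "'n \<Rightarrow> complex^'k^'k"
  assumes herm: "\<forall>j. hermitian_mat (As j)"
    and det_rep: "\<forall>x. complex_of_real (x \<bullet> (A *v x) + b \<bullet> x + 1) = det (mat 1 + pencil As x)"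
    and pos: "x \<bullet> (A *v x) > 0"
  shows "\<exists>y\<in>{x, - x}. psd_herm (pencil As y) \<and> rank (pencil As y) = 2"
proof -
  obtain f d where B: "orthonormal_eigenbasis (pencil As x) f d"
    using hermitian_mat_has_orthonormal_eigenbasis[OF hermitian_mat_pencil[OF herm]] by blast
  note line = eigenvalues_pencil_on_line[OF det_rep B]
  have "card {j. d j \<noteq> 0} = 2"
  proof (rule ccontr)
    assume "card {j. d j \<noteq> 0} \<noteq> 2"
    then have "card {j. d j \<noteq> 0} < 2" using prod_one_plus_linear_eq_quadratic(1)[OF line] by simp
    then show False using prod_one_plus_linear_eq_quadratic(3)[OF line] pos by simp
  qed
  then obtain p q where pq: "{j. d j \<noteq> 0} = {p, q}" "p \<noteq> q" by (auto simp: card_2_iff)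
  then have "d p * d q > 0"
    using prod_one_plus_linear_eq_quadratic(2)[OF line] \<open>card {j. d j \<noteq> 0} = 2\<close> pos by simp
  moreover have "d j = 0" if "j \<noteq> p" "j \<noteq> q" for j using pq that by blast
  ultimately have same_sign: "(\<forall>j. 0 \<le> d j) \<or> (\<forall>j. 0 \<le> - d j)"
    by (metis linorder_le_cases neg_0_le_iff_le order_refl zero_less_mult_iff not_le)
  have rank: "rank (pencil As x) = 2" "rank (pencil As (- x)) = 2"
    using rank_eq_card_nonzero_eigenvalues[OF B] \<open>card {j. d j \<noteq> 0} = 2\<close>
      rank_eq_card_nonzero_eigenvalues[OF orthonormal_eigenbasis_uminus[OF B]]
    by (simp_all add: pencil_uminus)
  have "psd_herm (pencil As x) \<or> psd_herm (pencil As (- x))"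
    using same_sign psd_herm_iff_eigenvalues_nonneg[OF hermitian_mat_pencil[OF herm] B]
      psd_herm_iff_eigenvalues_nonneg[OF hermitian_mat_pencil[OF herm]
        orthonormal_eigenbasis_uminus[OF B, folded pencil_uminus]]
    by blast
  then show ?thesis using rank by blast
qed

theorem mainTheorem7:
  fixes A :: "real^'n^'n" and b :: "real^'n" and As :: "'n \<Rightarrow> complex^'k^'k"
  assumes "transpose A = A"
    and "A \<noteq> 0"
    and "\<forall>j. hermitian_mat (As j)"
    and "\<forall>x. complex_of_real (x \<bullet> (A *v x) + b \<bullet> x + 1) = det (mat 1 + pencil As x)"
  shows "\<not> contains_full_dim_cone As 2 \<longleftrightarrow> neg_semidef A"
proof
  assume no_cone: "\<not> contains_full_dim_cone As 2"
  show "neg_semidef A" unfolding neg_semidef_def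
  proof (rule allI, rule ccontr)
    fix v assume "\<not> v \<bullet> (A *v v) \<le> 0"
    then have "v \<bullet> (A *v v) > 0" by simp
    then have "\<exists>y\<in>{v, - v}. psd_herm (pencil As y) \<and> rank (pencil As y) = 2"
      by (rule psd_rank_two_if_quadratic_form_pos[OF assms(3,4)])
    then obtain y where "psd_herm (pencil As y)" "rank (pencil As y) = 2" by blast
    then show False using no_cone by (auto simp: contains_full_dim_cone_def)
  qed
next
  assume nsd: "neg_semidef A"
  show "\<not> contains_full_dim_cone As 2"
  proof
    assume "contains_full_dim_cone As 2"
    then obtain x where "psd_herm (pencil As x)" "rank (pencil As x) = 2"
      by (auto simp: contains_full_dim_cone_def)
    then have "x \<bullet> (A *v x) > 0" by (rule quadratic_form_pos_if_psd_rank_two[OF assms(3,4)])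
    moreover have "x \<bullet> (A *v x) \<le> 0" using nsd by (simp add: neg_semidef_def)
    ultimately show False by simp
  qed
qed

end
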